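(* Let $l\geq 1$ and $f\in C^{l-1}(\mathbb{R})$, and set $T_l(t)=\frac{(1-t)^{l+1}}{t}f(1-t)$ for $t>0$. Then $$[D^{l-1}T_{l}](t)=(-1)^{l-1}\sum_{m=0}^{l-1}P_{m,l}(t)f^{(m)}(1-t),$$ where $$P_{m,l}(t)=\sum_{\nu=m}^{l-1}E_{\nu,m,l}\frac{(1-t)^{\nu+2}}{t^{\nu+l-m}},\qquad E_{\nu,m,l}=\frac{(l-1)!}{2^{\nu-m}m!}\binom{l+1}{\nu+2}\binom{l-1+\nu-m}{\nu-m}.$$
   Context: $D$ denotes the operator $(D\varphi)(t)=\frac{1}{t}\varphi'(t)$ acting on functions of $t$ (here applied to $t\mapsto T_l(t)$), and $D^{j}$ its $j$-fold iterate. $\binom{a}{b}=0$ if $b>a$ or $b<0$. *)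

theory Defs
  imports "HOL-Analysis.Analysis"
begin

definition Ck :: "nat \<Rightarrow> (real \<Rightarrow> real) \<Rightarrow> bool" where
  "Ck k f \<longleftrightarrow> (\<forall>m<k. \<forall>x. ((deriv ^^ m) f) differentiable (at x))
                 \<and> (\<forall>m\<le>k. continuous_on UNIV ((deriv ^^ m) f))"

definition Dop :: "(real \<Rightarrow> real) \<Rightarrow> (real \<Rightarrow> real)" where
  "Dop \<phi> = (\<lambda>t. deriv \<phi> t / t)"

definition Tl :: "nat \<Rightarrow> (real \<Rightarrow> real) \<Rightarrow> real \<Rightarrow> real" where
  "Tl l f t = (1 - t) ^ (l + 1) / t * f (1 - t)"

definition Ecoef :: "nat \<Rightarrow> nat \<Rightarrow> nat \<Rightarrow> real" where
  "Ecoef \<nu> m l = fact (l - 1) / (2 ^ (\<nu> - m) * fact m)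
      * real ((l + 1) choose (\<nu> + 2)) * real ((l - 1 + \<nu> - m) choose (\<nu> - m))"

definition Pml :: "nat \<Rightarrow> nat \<Rightarrow> real \<Rightarrow> real" where
  "Pml m l t = (\<Sum>\<nu> = m..l - 1. Ecoef \<nu> m l * (1 - t) ^ (\<nu> + 2) / t ^ (\<nu> + l - m))"

end

theory Submission
  imports Defs
begin

text \<open>The operator D maps a term \<open>(1-t)^a t^{-b} f^{(r)}(1-t)\<close> to a combination of the three
  terms with \<open>(a,b,r)\<close> replaced by \<open>(a-1,b+1,r)\<close>, \<open>(a,b+2,r)\<close> and \<open>(a,b+1,r+1)\<close>. Hence
  \<open>D^j T_l\<close> is a combination of the terms with \<open>a = l+1-p\<close> and \<open>b = 1+j+q\<close>, where \<open>p, q, r\<close>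
  count how often each of the three moves was made (\<open>p+q+r = j\<close>). The coefficients obey a
  three-term recurrence whose solution is
  \<open>(-1)^j (j+q)! / (q! 2^q r!) * binomial(l+1, p)\<close>, which for \<open>j = l-1\<close> is \<open>(-1)^(l-1) E_{q+r,r,l}\<close>.\<close>

lemma diff_times_binomial_eq: "(n - k) * (n choose k) = Suc k * (n choose Suc k)"
  by (metis binomial_absorb_comp binomial_absorption)

definition expansion_coeff :: "nat \<Rightarrow> nat \<Rightarrow> nat \<Rightarrow> nat \<Rightarrow> real" where
  "expansion_coeff l j q r =
     (if q + r \<le> j
      then (-1) ^ j * fact (j + q) / (fact q * 2 ^ q * fact r) * real ((l + 1) choose (j - q - r))
      else 0)"

lemma expansion_coeff_eq_0: "j < q + r \<Longrightarrow> expansion_coeff l j q r = 0"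
  by (simp add: expansion_coeff_def)

lemma expansion_coeff_Suc:
  "expansion_coeff l (Suc j) q r =
     - real (l + 1 + q + r - j) * expansion_coeff l j q r
     - (if q = 0 then 0 else real (j + q) * expansion_coeff l j (q - 1) r)
     - (if r = 0 then 0 else expansion_coeff l j q (r - 1))"
proof (cases "q + r \<le> Suc j")
  case False
  then show ?thesis by (simp add: expansion_coeff_eq_0)
next
  case True
  define p where "p = Suc j - q - r"
  define B where "B = (-1) ^ Suc j * fact (j + q) / (fact q * 2 ^ q * fact r) * real ((l + 1) choose p)"
  have coeff_Suc: "expansion_coeff l (Suc j) q r = real (Suc j + q) * B"
    using True by (simp add: expansion_coeff_def B_def p_def del: binomial_Suc_Suc)
  have lower: "- real (l + 1 + q + r - j) * expansion_coeff l j q r = real p * B"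
  proof (cases "q + r \<le> j")
    case False
    then show ?thesis using True by (simp add: expansion_coeff_eq_0 p_def)
  next
    case le: True
    have "(l + 1 + q + r - j) * ((l + 1) choose (j - q - r)) = p * ((l + 1) choose p)"
      using diff_times_binomial_eq[of "l + 1" "j - q - r"] le
      by (simp add: p_def Suc_diff_le add.assoc del: binomial_Suc_Suc)
    then have "real (l + 1 + q + r - j) * real ((l + 1) choose (j - q - r)) = real p * real ((l + 1) choose p)"
      by (metis of_nat_mult)
    then show ?thesis
      using le unfolding expansion_coeff_def B_def by (simp del: binomial_Suc_Suc)
  qed
  have raise_t: "(if q = 0 then 0 else real (j + q) * expansion_coeff l j (q - 1) r) = - real (2 * q) * B"
  proof (cases "q = 0")
    case False
    have "fact (j + q) = real (j + q) * (fact (j + (q - 1)) :: real)"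
      using False fact_reduce[of "j + q"] by simp
    moreover have "fact q = real q * (fact (q - 1) :: real)" "(2::real) ^ q = 2 * 2 ^ (q - 1)"
      using False by (simp_all add: fact_reduce power_eq_if)
    moreover have "j - (q - 1) - r = p" "q - 1 + r \<le> j"
      using False True by (simp_all add: p_def)
    ultimately show ?thesis
      using False unfolding expansion_coeff_def B_def by (simp add: field_simps)
  qed simp
  have raise_r: "(if r = 0 then 0 else expansion_coeff l j q (r - 1)) = - real r * B"
  proof (cases "r = 0")
    case False
    have "fact r = real r * (fact (r - 1) :: real)"
      using False by (simp add: fact_reduce)
    moreover have "j - q - (r - 1) = p" "q + (r - 1) \<le> j"
      using False True by (simp_all add: p_def)
    ultimately show ?thesis
      using False unfolding expansion_coeff_def B_def by (simp add: field_simps)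
  qed simp
  have "Suc j + q = p + 2 * q + r"
    using True by (simp add: p_def)
  then have "real (Suc j + q) * B = real p * B + real (2 * q) * B + real r * B"
    by (simp only: of_nat_add distrib_right)
  then show ?thesis
    unfolding coeff_Suc lower raise_t raise_r by simp
qed

lemma sum_square_Suc_eq:
  fixes F :: "nat \<Rightarrow> nat \<Rightarrow> 'a :: comm_monoid_add"
  assumes "\<And>q r. j < q + r \<Longrightarrow> F q r = 0"
  shows "(\<Sum>q\<le>Suc j. \<Sum>r\<le>Suc j. F q r) = (\<Sum>q\<le>j. \<Sum>r\<le>j. F q r)"
  by (simp add: sum.atMost_Suc assms)

lemma sum_expansion_coeff_Suc:
  fixes X :: "nat \<Rightarrow> nat \<Rightarrow> real"
  shows "(\<Sum>q\<le>Suc j. \<Sum>r\<le>Suc j. expansion_coeff l (Suc j) q r * X q r) =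
         (\<Sum>q\<le>j. \<Sum>r\<le>j. expansion_coeff l j q r *
            (- real (l + 1 + q + r - j) * X q r - real (1 + j + q) * X (Suc q) r - X q (Suc r)))"
proof -
  have lower: "(\<Sum>q\<le>Suc j. \<Sum>r\<le>Suc j. - real (l + 1 + q + r - j) * expansion_coeff l j q r * X q r)
      = (\<Sum>q\<le>j. \<Sum>r\<le>j. - real (l + 1 + q + r - j) * expansion_coeff l j q r * X q r)"
    by (rule sum_square_Suc_eq) (simp add: expansion_coeff_eq_0)
  have raise_t: "(\<Sum>q\<le>Suc j. \<Sum>r\<le>Suc j. (if q = 0 then 0 else real (j + q) * expansion_coeff l j (q - 1) r) * X q r)
      = (\<Sum>q\<le>j. \<Sum>r\<le>j. real (1 + j + q) * expansion_coeff l j q r * X (Suc q) r)"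
    by (subst sum.atMost_Suc_shift) (simp add: sum.atMost_Suc expansion_coeff_eq_0)
  have raise_r: "(\<Sum>q\<le>Suc j. \<Sum>r\<le>Suc j. (if r = 0 then 0 else expansion_coeff l j q (r - 1)) * X q r)
      = (\<Sum>q\<le>j. \<Sum>r\<le>j. expansion_coeff l j q r * X q (Suc r))"
  proof -
    have "(\<Sum>r\<le>Suc j. (if r = 0 then 0 else expansion_coeff l j q (r - 1)) * X q r)
        = (\<Sum>r\<le>j. expansion_coeff l j q r * X q (Suc r))" for q
      by (subst sum.atMost_Suc_shift) simp
    then show ?thesis
      by (simp add: sum.atMost_Suc expansion_coeff_eq_0)
  qed
  show ?thesis
    unfolding expansion_coeff_Suc left_diff_distrib sum_subtractf lower raise_t raise_r
    by (simp add: sum_subtractf[symmetric] algebra_simps)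
qed

definition monomial_term :: "(nat \<Rightarrow> real \<Rightarrow> real) \<Rightarrow> nat \<Rightarrow> nat \<Rightarrow> nat \<Rightarrow> real \<Rightarrow> real" where
  "monomial_term g a b r t = (1 - t) ^ a / t ^ b * g r (1 - t)"

text \<open>For \<open>a = 0\<close> the truncated exponent \<open>a - 1\<close> is harmless: its coefficient is 0.\<close>

lemma monomial_term_has_real_derivative:
  assumes "t \<noteq> 0" and "(g r has_real_derivative g (Suc r) (1 - t)) (at (1 - t))"
  shows "(monomial_term g a b r has_real_derivative
           t * (- real a * monomial_term g (a - 1) (b + 1) r t
                - real b * monomial_term g a (b + 2) r t
                - monomial_term g a (b + 1) (Suc r) t)) (at t)"
proof -
  have reflected: "((\<lambda>t. g r (1 - t)) has_real_derivative g (Suc r) (1 - t) * (-1)) (at t)"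
    by (rule DERIV_chain2[where f = "g r" and g = "\<lambda>t. 1 - t", OF assms(2)])
       (auto intro!: derivative_eq_intros)
  show ?thesis
    unfolding monomial_term_def [abs_def]
    by (rule derivative_eq_intros reflected refl | simp add: assms(1))+
       (cases b; simp add: field_simps assms(1))
qed

definition Dop_expansion :: "nat \<Rightarrow> (nat \<Rightarrow> real \<Rightarrow> real) \<Rightarrow> nat \<Rightarrow> real \<Rightarrow> real" where
  "Dop_expansion l g j t =
     (\<Sum>q\<le>j. \<Sum>r\<le>j. expansion_coeff l j q r * monomial_term g (l + 1 + q + r - j) (1 + j + q) r t)"

lemma Dop_expansion_has_real_derivative:
  assumes "t \<noteq> 0" and "\<And>r. r \<le> j \<Longrightarrow> (g r has_real_derivative g (Suc r) (1 - t)) (at (1 - t))"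
  shows "(Dop_expansion l g j has_real_derivative t * Dop_expansion l g (Suc j) t) (at t)"
proof -
  let ?a = "\<lambda>q r. l + 1 + q + r - j" and ?b = "\<lambda>q. 1 + j + q"
  have "(Dop_expansion l g j has_real_derivative
      (\<Sum>q\<le>j. \<Sum>r\<le>j. expansion_coeff l j q r *
         (t * (- real (?a q r) * monomial_term g (?a q r - 1) (?b q + 1) r t
               - real (?b q) * monomial_term g (?a q r) (?b q + 2) r t
               - monomial_term g (?a q r) (?b q + 1) (Suc r) t)))) (at t)"
    (is "(_ has_real_derivative ?D) _")
    unfolding Dop_expansion_def [abs_def]
    by (intro DERIV_sum DERIV_cmult monomial_term_has_real_derivative assms) auto
  moreover have "?D = t * Dop_expansion l g (Suc j) t"
    unfolding Dop_expansion_def sum_expansion_coeff_Suc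
    by (simp add: sum_distrib_left algebra_simps)
  ultimately show ?thesis
    by simp
qed

lemma Dop_power_Tl_eq_Dop_expansion:
  assumes "\<And>m x. m < j \<Longrightarrow> (deriv ^^ m) f differentiable (at x)" and "t > 0"
  shows "(Dop ^^ j) (Tl l f) t = Dop_expansion l (\<lambda>r. (deriv ^^ r) f) j t"
  using assms
proof (induction j arbitrary: t)
  case 0
  then show ?case
    by (simp add: Dop_expansion_def expansion_coeff_def monomial_term_def Tl_def)
next
  case (Suc j)
  let ?g = "\<lambda>r. (deriv ^^ r) f"
  have "(?g r has_real_derivative ?g (Suc r) (1 - t)) (at (1 - t))" if "r \<le> j" for r
    using Suc.prems(1) that by (simp add: DERIV_deriv_iff_real_differentiable)
  then have "(Dop_expansion l ?g j has_real_derivative t * Dop_expansion l ?g (Suc j) t) (at t)"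
    using Suc.prems(2) by (intro Dop_expansion_has_real_derivative) auto
  then have "((Dop ^^ j) (Tl l f) has_real_derivative t * Dop_expansion l ?g (Suc j) t) (at t)"
    by (rule has_field_derivative_transform_within_open [where S = "{0<..}"])
       (use Suc in auto)
  then have "deriv ((Dop ^^ j) (Tl l f)) t / t = Dop_expansion l ?g (Suc j) t"
    using Suc.prems(2) by (simp add: DERIV_imp_deriv)
  moreover have "(Dop ^^ Suc j) (Tl l f) t = deriv ((Dop ^^ j) (Tl l f)) t / t"
    by (simp add: Dop_def)
  ultimately show ?case
    by simp
qed

lemma expansion_coeff_eq_Ecoef:
  assumes "q + r \<le> n"
  shows "expansion_coeff (Suc n) n q r = (-1) ^ n * Ecoef (q + r) r (Suc n)"
proof -
  have "(Suc n + 1) choose (n - q - r) = (n + 2) choose (q + r + 2)"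
    using assms binomial_symmetric [of "n - q - r" "n + 2"] by simp
  moreover have "fact (n + q) = fact q * fact n * real ((n + q) choose q)"
    by (simp add: binomial_fact)
  ultimately show ?thesis
    using assms by (simp add: expansion_coeff_def Ecoef_def field_simps)
qed

lemma Dop_expansion_eq_Pml_sum:
  "Dop_expansion (Suc n) g n t = (-1) ^ n * (\<Sum>m\<le>n. Pml m (Suc n) t * g m (1 - t))"
proof -
  have column: "(\<Sum>q\<le>n. expansion_coeff (Suc n) n q r * monomial_term g (Suc n + 1 + q + r - n) (1 + n + q) r t)
      = (-1) ^ n * (Pml r (Suc n) t * g r (1 - t))" if "r \<le> n" for r
  proof -
    have "(\<Sum>q\<le>n. expansion_coeff (Suc n) n q r * monomial_term g (Suc n + 1 + q + r - n) (1 + n + q) r t)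
        = (\<Sum>q = 0..n - r. expansion_coeff (Suc n) n q r * monomial_term g (Suc n + 1 + q + r - n) (1 + n + q) r t)"
      by (rule sum.mono_neutral_right) (auto simp: expansion_coeff_eq_0)
    also have "\<dots> = (\<Sum>q = 0..n - r. (-1) ^ n * (Ecoef (r + q) r (Suc n) * (1 - t) ^ (r + q + 2) / t ^ (r + q + Suc n - r) * g r (1 - t)))"
      by (rule sum.cong) (use that in \<open>auto simp: expansion_coeff_eq_Ecoef monomial_term_def add.commute\<close>)
    also have "\<dots> = (-1) ^ n * (\<Sum>q = 0..n - r. Ecoef (r + q) r (Suc n) * (1 - t) ^ (r + q + 2) / t ^ (r + q + Suc n - r)) * g r (1 - t)"
      by (simp add: sum_distrib_left sum_distrib_right mult.assoc)
    also have "\<dots> = (-1) ^ n * (Pml r (Suc n) t * g r (1 - t))"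
      using that by (simp add: Pml_def sum.atLeastAtMost_shift_0 [of r n] comp_def)
    finally show ?thesis .
  qed
  have "Dop_expansion (Suc n) g n t
      = (\<Sum>r\<le>n. \<Sum>q\<le>n. expansion_coeff (Suc n) n q r * monomial_term g (Suc n + 1 + q + r - n) (1 + n + q) r t)"
    unfolding Dop_expansion_def by (rule sum.swap)
  also have "\<dots> = (\<Sum>r\<le>n. (-1) ^ n * (Pml r (Suc n) t * g r (1 - t)))"
    by (intro sum.cong refl column) simp
  finally show ?thesis
    by (simp add: sum_distrib_left)
qed

theorem lemma3p4:
  fixes f :: "real \<Rightarrow> real" and l :: nat and t :: real
  assumes "l \<ge> 1" and "Ck (l - 1) f" and "t > 0"
  shows "(Dop ^^ (l - 1)) (Tl l f) t
         = (-1) ^ (l - 1) * (\<Sum>m = 0..l - 1. Pml m l t * (deriv ^^ m) f (1 - t))"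
proof -
  obtain n where l: "l = Suc n"
    using assms(1) by (cases l) auto
  have "\<And>m x. m < l - 1 \<Longrightarrow> (deriv ^^ m) f differentiable (at x)"
    using assms(2) by (simp add: Ck_def)
  then have "(Dop ^^ (l - 1)) (Tl l f) t = Dop_expansion l (\<lambda>m. (deriv ^^ m) f) (l - 1) t"
    using assms(3) by (rule Dop_power_Tl_eq_Dop_expansion)
  also have "\<dots> = (-1) ^ (l - 1) * (\<Sum>m = 0..l - 1. Pml m l t * (deriv ^^ m) f (1 - t))"
    unfolding l by (simp add: Dop_expansion_eq_Pml_sum atLeast0AtMost)
  finally show ?thesis .
qed

end
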